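(* Let $p$ be a real homogeneous polynomial of degree $N$ on $\mathbb{R}^n$ with all coefficients $\ge0$, $p(1,\dots,1)=1$, and $\frac{\partial p}{\partial x_1}(e)=\cdots=\frac{\partial p}{\partial x_n}(e)=k>0$ where $e=(1,\dots,1)$ ($p$ need not be symmetric). Then for every positive definite $A=(a_{ij})\in\mathrm{Sym}^2(\mathbb{R}^n)$: (i) $p(a_{11},a_{22},\dots,a_{nn})^{1/N}\ge(\det A)^{1/n}$; (ii) $p(\lambda_1(A),\dots,\lambda_n(A))^{1/N}\ge(\det A)^{1/n}$, where $\lambda_1(A)\le\lambda_2(A)\le\cdots\le\lambda_n(A)$ are the eigenvalues of $A$ in increasing order.
   Context: $\mathrm{Sym}^2(\mathbb{R}^n)$ is the space of real symmetric $n\times n$ matrices. *)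

theory Defs
  imports "HOL-Analysis.Analysis" "Jordan_Normal_Form.Char_Poly"
begin

definition multi_idx :: "nat \<Rightarrow> nat \<Rightarrow> (nat \<Rightarrow> nat) set" where
  "multi_idx n N = {\<alpha>. (\<forall>i\<ge>n. \<alpha> i = 0) \<and> (\<Sum>i<n. \<alpha> i) = N}"

definition hpoly_eval :: "nat \<Rightarrow> nat \<Rightarrow> ((nat \<Rightarrow> nat) \<Rightarrow> real) \<Rightarrow> (nat \<Rightarrow> real) \<Rightarrow> real" where
  "hpoly_eval n N c x = (\<Sum>\<alpha>\<in>multi_idx n N. c \<alpha> * (\<Prod>i<n. x i ^ \<alpha> i))"

definition pos_def_sym :: "nat \<Rightarrow> real mat \<Rightarrow> bool" where
  "pos_def_sym n A \<longleftrightarrow> A \<in> carrier_mat n n \<and> transpose_mat A = A \<and>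
     (\<forall>v \<in> carrier_vec n. v \<noteq> 0\<^sub>v n \<longrightarrow> v \<bullet> (A *\<^sub>v v) > 0)"

definition sorted_eigenvalues :: "nat \<Rightarrow> real mat \<Rightarrow> real list \<Rightarrow> bool" where
  "sorted_eigenvalues n A ls \<longleftrightarrow> length ls = n \<and> sorted ls \<and>
     char_poly A = (\<Prod>a\<leftarrow>ls. [:- a, 1:])"

end

theory Submission
  imports Defs
begin

text \<open>Since p(e) = 1, the coefficients c(a) of p are probability weights, and the hypothesis on
  the partial derivatives says that the c-weighted mean of every exponent a(j) is k; Euler's
  identity for homogeneous polynomials then gives N = n k. Concavity of ln (weighted AM-GM) yields
  ln p(x) \<ge> \<Sum>a. c(a) ln x^a = k ln (x_1 ... x_n), i.e. p(x)^(1/N) \<ge> (x_1 ... x_n)^(1/n) for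
  positive x. Part (ii) follows since det A is the product of the (positive) eigenvalues, and
  part (i) from Hadamard's inequality det A \<le> a_11 ... a_nn, proved by induction via the Schur
  complement of a_11.\<close>

section \<open>Positive definite matrices and Hadamard's inequality\<close>

definition quad_form :: "nat \<Rightarrow> real mat \<Rightarrow> (nat \<Rightarrow> real) \<Rightarrow> real" where
  "quad_form n A x = (\<Sum>i<n. \<Sum>j<n. x i * A $$ (i, j) * x j)"

lemma quad_form_cong: "(\<And>i. i < n \<Longrightarrow> x i = y i) \<Longrightarrow> quad_form n A x = quad_form n A y"
  unfolding quad_form_def by (intro sum.cong refl) auto

lemma scalar_prod_mult_mat_vec_eq_quad_form:
  assumes A: "A \<in> carrier_mat n n" and v: "v \<in> carrier_vec n"
  shows "v \<bullet> (A *\<^sub>v v) = quad_form n A (\<lambda>i. v $ i)"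
proof -
  have "v \<bullet> (A *\<^sub>v v) = (\<Sum>i\<in>{0..<n}. v $ i * (A *\<^sub>v v) $ i)"
    unfolding scalar_prod_def using A by simp
  also have "\<dots> = (\<Sum>i\<in>{0..<n}. v $ i * (\<Sum>j\<in>{0..<n}. A $$ (i, j) * v $ j))"
    using A v by (intro sum.cong refl) (simp add: scalar_prod_def)
  also have "\<dots> = quad_form n A (\<lambda>i. v $ i)"
    unfolding quad_form_def lessThan_atLeast0 by (simp add: sum_distrib_left mult.assoc)
  finally show ?thesis .
qed

lemma pos_def_sym_iff_quad_form:
  "pos_def_sym n A \<longleftrightarrow> A \<in> carrier_mat n n \<and> transpose_mat A = A \<and>
     (\<forall>x. (\<exists>i<n. x i \<noteq> 0) \<longrightarrow> quad_form n A x > 0)"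
proof -
  have "(\<forall>v \<in> carrier_vec n. v \<noteq> 0\<^sub>v n \<longrightarrow> v \<bullet> (A *\<^sub>v v) > 0) \<longleftrightarrow>
        (\<forall>x. (\<exists>i<n. x i \<noteq> 0) \<longrightarrow> quad_form n A x > 0)" if A: "A \<in> carrier_mat n n"
  proof
    assume pos: "\<forall>v \<in> carrier_vec n. v \<noteq> 0\<^sub>v n \<longrightarrow> v \<bullet> (A *\<^sub>v v) > 0"
    show "\<forall>x. (\<exists>i<n. x i \<noteq> 0) \<longrightarrow> quad_form n A x > 0"
    proof (intro allI impI)
      fix x :: "nat \<Rightarrow> real" assume "\<exists>i<n. x i \<noteq> 0"
      then obtain i where "i < n" "x i \<noteq> 0" by blast
      then have "vec n x \<noteq> 0\<^sub>v n" by (metis index_vec index_zero_vec(1))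
      with pos have "vec n x \<bullet> (A *\<^sub>v vec n x) > 0" by simp
      also have "vec n x \<bullet> (A *\<^sub>v vec n x) = quad_form n A x"
        unfolding scalar_prod_mult_mat_vec_eq_quad_form[OF A vec_carrier] by (rule quad_form_cong) simp
      finally show "quad_form n A x > 0" .
    qed
  next
    assume pos: "\<forall>x. (\<exists>i<n. x i \<noteq> 0) \<longrightarrow> quad_form n A x > 0"
    show "\<forall>v \<in> carrier_vec n. v \<noteq> 0\<^sub>v n \<longrightarrow> v \<bullet> (A *\<^sub>v v) > 0"
    proof (intro ballI impI)
      fix v :: "real vec" assume v: "v \<in> carrier_vec n" "v \<noteq> 0\<^sub>v n"
      have "\<exists>i<n. v $ i \<noteq> 0"
      proof (rule ccontr)
        assume "\<not> (\<exists>i<n. v $ i \<noteq> 0)"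
        then have "v = 0\<^sub>v n" using v(1) by (intro eq_vecI) auto
        then show False using v(2) by simp
      qed
      with pos v show "v \<bullet> (A *\<^sub>v v) > 0"
        by (simp add: scalar_prod_mult_mat_vec_eq_quad_form[OF A])
    qed
  qed
  then show ?thesis unfolding pos_def_sym_def by blast
qed

lemma pos_def_sym_quad_form_pos: "pos_def_sym n A \<Longrightarrow> \<exists>i<n. x i \<noteq> 0 \<Longrightarrow> quad_form n A x > 0"
  unfolding pos_def_sym_iff_quad_form by (elim conjE) (erule allE, erule mp)

lemma pos_def_sym_symmetric:
  assumes "pos_def_sym n A" "i < n" "j < n"
  shows "A $$ (i, j) = A $$ (j, i)"
proof -
  have "A \<in> carrier_mat n n" "transpose_mat A = A" using assms(1) unfolding pos_def_sym_def by auto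
  then have "A $$ (i, j) = transpose_mat A $$ (i, j)" by simp
  also have "\<dots> = A $$ (j, i)" using \<open>A \<in> carrier_mat n n\<close> assms(2,3) by simp
  finally show ?thesis .
qed

lemma quad_form_unit:
  assumes "m < n" shows "quad_form n A (\<lambda>i. if i = m then 1 else 0) = A $$ (m, m)"
proof -
  have "(if i = m then 1 else 0) * A $$ (i, j) * (if j = m then 1 else 0) =
        (if i = m then (if j = m then A $$ (i, j) else 0) else (0::real))" for i j
    by simp
  then have "quad_form n A (\<lambda>i. if i = m then 1 else 0) =
        (\<Sum>i<n. if i = m then (\<Sum>j<n. if j = m then A $$ (i, j) else 0) else 0)"
    unfolding quad_form_def by (intro sum.cong) auto
  then show ?thesis using assms by simp
qed

lemma pos_def_sym_diag_pos: "pos_def_sym n A \<Longrightarrow> m < n \<Longrightarrow> A $$ (m, m) > 0"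
  using pos_def_sym_quad_form_pos[of n A "\<lambda>i. if i = m then 1 else 0"] quad_form_unit[of m n A]
  by auto

lemma quad_form_Suc:
  "quad_form (Suc n) A x = x 0 * A $$ (0, 0) * x 0 + x 0 * (\<Sum>j<n. A $$ (0, Suc j) * x (Suc j))
     + (\<Sum>i<n. x (Suc i) * A $$ (Suc i, 0)) * x 0
     + (\<Sum>i<n. \<Sum>j<n. x (Suc i) * A $$ (Suc i, Suc j) * x (Suc j))"
  unfolding quad_form_def sum.lessThan_Suc_shift
  by (simp add: sum.distrib sum_distrib_left sum_distrib_right algebra_simps)

definition schur_compl :: "nat \<Rightarrow> 'a :: field mat \<Rightarrow> 'a mat" where
  "schur_compl n A =
     mat n n (\<lambda>(i, j). A $$ (Suc i, Suc j) - A $$ (Suc i, 0) / A $$ (0, 0) * A $$ (0, Suc j))"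

lemma det_schur_compl:
  fixes A :: "'a :: field mat"
  assumes A: "A \<in> carrier_mat (Suc n) (Suc n)" and a: "A $$ (0, 0) \<noteq> 0"
  shows "det A = A $$ (0, 0) * det (schur_compl n A)"
proof -
  define a where "a = A $$ (0, 0)"
  define L :: "'a mat" where "L = mat (Suc n) (Suc n)
    (\<lambda>(i, j). if i = j then 1 else if j = 0 then - A $$ (i, 0) / a else 0)"
  define M :: "'a mat" where "M = mat (Suc n) (Suc n)
    (\<lambda>(i, j). if i = 0 then A $$ (0, j) else A $$ (i, j) - A $$ (i, 0) / a * A $$ (0, j))"
  have L: "L \<in> carrier_mat (Suc n) (Suc n)" and M: "M \<in> carrier_mat (Suc n) (Suc n)"
    unfolding L_def M_def by simp_all
  have "det L = prod_list (diag_mat L)" by (rule det_lower_triangular[OF _ L]) (auto simp: L_def)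
  also have "\<dots> = 1" unfolding prod_list_diag_prod using L by (intro prod.neutral) (auto simp: L_def)
  finally have det_L: "det L = 1" .
  \<comment> \<open>L subtracts multiples of the first row, clearing the first column below the pivot.\<close>
  have "L * A = M"
  proof (rule eq_matI)
    fix i j assume "i < dim_row M" "j < dim_col M"
    then have ij: "i < Suc n" "j < Suc n" using M by auto
    have "(L * A) $$ (i, j) = (\<Sum>k\<in>{0..<Suc n}. L $$ (i, k) * A $$ (k, j))"
      using ij L A by (simp add: scalar_prod_def)
    also have "\<dots> = (\<Sum>k\<in>{0..<Suc n}. (if k = i then A $$ (k, j) else 0)
        + (if k = 0 then (if i = 0 then 0 else - A $$ (i, 0) / a * A $$ (k, j)) else 0))"
      using ij by (intro sum.cong refl) (auto simp: L_def)
    also have "\<dots> = M $$ (i, j)" using ij by (simp add: sum.distrib M_def)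
    finally show "(L * A) $$ (i, j) = M $$ (i, j)" .
  qed (use L A M in auto)
  then have "det A = det M" using det_mult[OF L A] det_L by simp
  also have "\<dots> = (\<Sum>i<Suc n. M $$ (i, 0) * cofactor M i 0)"
    by (rule laplace_expansion_column[OF M]) simp
  also have "\<dots> = M $$ (0, 0) * cofactor M 0 0"
    unfolding sum.lessThan_Suc_shift using a by (simp add: M_def a_def)
  also have "mat_delete M 0 0 = schur_compl n A"
    by (rule eq_matI) (auto simp: mat_delete_def M_def schur_compl_def a_def)
  then have "M $$ (0, 0) * cofactor M 0 0 = a * det (schur_compl n A)"
    by (simp add: cofactor_def M_def a_def)
  finally show ?thesis unfolding a_def .
qed

lemma quad_form_schur_compl:
  fixes A :: "real mat" and w :: "nat \<Rightarrow> real"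
  assumes A: "pos_def_sym (Suc n) A"
  defines "a \<equiv> A $$ (0, 0)" and "s \<equiv> (\<Sum>j<n. A $$ (0, Suc j) * w j)"
  shows "quad_form n (schur_compl n A) w = quad_form (Suc n) A (\<lambda>i. if i = 0 then - s / a else w (i - 1))"
proof -
  define R where "R = (\<Sum>i<n. \<Sum>j<n. w i * A $$ (Suc i, Suc j) * w j)"
  have a: "a > 0" unfolding a_def by (rule pos_def_sym_diag_pos[OF A]) simp
  have s_sym: "(\<Sum>i<n. w i * A $$ (Suc i, 0)) = s" unfolding s_def
    by (intro sum.cong refl) (simp add: pos_def_sym_symmetric[OF A, of "Suc _" 0] mult.commute)
  have "quad_form n (schur_compl n A) w =
        (\<Sum>i<n. \<Sum>j<n. w i * A $$ (Suc i, Suc j) * w j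
                       - (w i * A $$ (Suc i, 0)) * (A $$ (0, Suc j) * w j) / a)"
    unfolding quad_form_def by (intro sum.cong refl) (simp add: schur_compl_def a_def algebra_simps)
  also have "\<dots> = R - s * s / a"
    unfolding R_def sum_subtractf sum_product[symmetric] sum_divide_distrib[symmetric] s_sym s_def ..
  also have "\<dots> = (- s / a) * a * (- s / a) + (- s / a) * s + s * (- s / a) + R"
    using a by (simp add: field_simps)
  also have "\<dots> = quad_form (Suc n) A (\<lambda>i. if i = 0 then - s / a else w (i - 1))"
    unfolding quad_form_Suc using s_sym by (simp add: R_def s_def a_def)
  finally show ?thesis .
qed

lemma pos_def_sym_schur_compl:
  assumes A: "pos_def_sym (Suc n) A"
  shows "pos_def_sym n (schur_compl n A)"
  unfolding pos_def_sym_iff_quad_form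
proof (intro conjI allI impI)
  show "schur_compl n A \<in> carrier_mat n n" by (simp add: schur_compl_def)
  show "transpose_mat (schur_compl n A) = schur_compl n A"
    using pos_def_sym_symmetric[OF A]
    by (intro eq_matI) (auto simp: schur_compl_def algebra_simps)
next
  fix w :: "nat \<Rightarrow> real" assume "\<exists>i<n. w i \<noteq> 0"
  then obtain i where "i < n" "w i \<noteq> 0" by blast
  then show "quad_form n (schur_compl n A) w > 0"
    unfolding quad_form_schur_compl[OF A] by (intro pos_def_sym_quad_form_pos[OF A] exI[of _ "Suc i"]) simp
qed

lemma schur_compl_diag_le:
  assumes A: "pos_def_sym (Suc n) A" and i: "i < n"
  shows "schur_compl n A $$ (i, i) \<le> A $$ (Suc i, Suc i)"
proof -
  have "schur_compl n A $$ (i, i) = A $$ (Suc i, Suc i) - (A $$ (Suc i, 0))\<^sup>2 / A $$ (0, 0)"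
    using i pos_def_sym_symmetric[OF A, of 0 "Suc i"] by (simp add: schur_compl_def power2_eq_square)
  then show ?thesis using pos_def_sym_diag_pos[OF A, of 0] by simp
qed

lemma det_carrier_mat_0: "A \<in> carrier_mat 0 0 \<Longrightarrow> det A = 1"
  by (metis det_one eq_matI carrier_matD one_carrier_mat less_nat_zero_code)

theorem hadamard_pos_def_sym:
  "pos_def_sym n A \<Longrightarrow> 0 < det A \<and> det A \<le> (\<Prod>i<n. A $$ (i, i))"
proof (induction n arbitrary: A)
  case 0
  then show ?case using det_carrier_mat_0 unfolding pos_def_sym_def by simp
next
  case (Suc n)
  define a where "a = A $$ (0, 0)"
  have a: "a > 0" unfolding a_def by (rule pos_def_sym_diag_pos[OF Suc.prems]) simp
  have det_A: "det A = a * det (schur_compl n A)"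
    using Suc.prems a unfolding a_def pos_def_sym_def by (intro det_schur_compl) auto
  have S: "pos_def_sym n (schur_compl n A)" by (rule pos_def_sym_schur_compl[OF Suc.prems])
  note IH = Suc.IH[OF S]
  have "(\<Prod>i<n. schur_compl n A $$ (i, i)) \<le> (\<Prod>i<n. A $$ (Suc i, Suc i))"
    using pos_def_sym_diag_pos[OF S] schur_compl_diag_le[OF Suc.prems]
    by (intro prod_mono) (auto intro: less_imp_le)
  then have "det A \<le> a * (\<Prod>i<n. A $$ (Suc i, Suc i))"
    using det_A IH a by (simp add: mult_left_mono order_trans)
  also have "\<dots> = (\<Prod>i<Suc n. A $$ (i, i))" unfolding prod.lessThan_Suc_shift a_def ..
  finally show ?case using det_A IH a by simp
qed

section \<open>Homogeneous polynomials with nonnegative coefficients\<close>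

lemma finite_multi_idx: "finite (multi_idx n N)"
proof -
  have "multi_idx n N \<subseteq> (\<lambda>f i. if i < n then f i else 0) ` (PiE {..<n} (\<lambda>_. {..N}))"
  proof
    fix \<alpha> assume "\<alpha> \<in> multi_idx n N"
    then have \<alpha>: "\<forall>i\<ge>n. \<alpha> i = 0" "(\<Sum>i<n. \<alpha> i) = N" unfolding multi_idx_def by auto
    have "\<alpha> i \<le> N" if "i < n" for i using \<alpha>(2) member_le_sum[of i "{..<n}" \<alpha>] that by auto
    then have "restrict \<alpha> {..<n} \<in> PiE {..<n} (\<lambda>_. {..N})" by auto
    moreover have "\<alpha> = (\<lambda>i. if i < n then restrict \<alpha> {..<n} i else 0)"
      using \<alpha>(1) by (auto simp: fun_eq_iff)
    ultimately show "\<alpha> \<in> (\<lambda>f i. if i < n then f i else 0) ` (PiE {..<n} (\<lambda>_. {..N}))"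
      by (intro image_eqI)
  qed
  then show ?thesis by (rule finite_subset) (intro finite_imageI finite_PiE; simp)
qed

lemma hpoly_eval_ones: "hpoly_eval n N c (\<lambda>i. 1) = (\<Sum>\<alpha>\<in>multi_idx n N. c \<alpha>)"
  unfolding hpoly_eval_def by simp

lemma has_real_derivative_hpoly_eval_ones:
  assumes "j < n"
  shows "((\<lambda>t. hpoly_eval n N c (\<lambda>i. 1 + (if i = j then t else 0))) has_real_derivative
           (\<Sum>\<alpha>\<in>multi_idx n N. c \<alpha> * real (\<alpha> j))) (at 0)"
proof -
  have "(\<Prod>i<n. (1 + (if i = j then t else 0)) ^ \<alpha> i) = (1 + t) ^ \<alpha> j" for t :: real and \<alpha>
  proof -
    have "(\<Prod>i<n. (1 + (if i = j then t else 0)) ^ \<alpha> i) = (\<Prod>i<n. if i = j then (1 + t) ^ \<alpha> i else 1)"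
      by (intro prod.cong) auto
    then show ?thesis using assms by simp
  qed
  then have "hpoly_eval n N c (\<lambda>i. 1 + (if i = j then t else 0)) =
             (\<Sum>\<alpha>\<in>multi_idx n N. c \<alpha> * (1 + t) ^ \<alpha> j)" for t
    unfolding hpoly_eval_def by simp
  moreover have "((\<lambda>t. \<Sum>\<alpha>\<in>multi_idx n N. c \<alpha> * (1 + t) ^ \<alpha> j) has_real_derivative
      (\<Sum>\<alpha>\<in>multi_idx n N. c \<alpha> * (real (\<alpha> j) * (1 + 0) ^ (\<alpha> j - 1)))) (at 0)"
    by (intro DERIV_sum DERIV_cmult) (auto intro!: derivative_eq_intros)
  ultimately show ?thesis by simp
qed

lemma euler_identity_hpoly_ones:
  "(\<Sum>j<n. \<Sum>\<alpha>\<in>multi_idx n N. c \<alpha> * real (\<alpha> j)) = real N * (\<Sum>\<alpha>\<in>multi_idx n N. c \<alpha>)"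
proof -
  have "(\<Sum>j<n. \<Sum>\<alpha>\<in>multi_idx n N. c \<alpha> * real (\<alpha> j)) =
        (\<Sum>\<alpha>\<in>multi_idx n N. c \<alpha> * real (\<Sum>j<n. \<alpha> j))"
    by (subst sum.swap) (simp add: sum_distrib_left)
  also have "\<dots> = (\<Sum>\<alpha>\<in>multi_idx n N. c \<alpha> * real N)"
    by (intro sum.cong refl) (simp add: multi_idx_def)
  finally show ?thesis by (simp add: sum_distrib_left mult.commute)
qed

lemma hpoly_eval_pos:
  assumes c_nonneg: "\<forall>\<alpha>\<in>multi_idx n N. c \<alpha> \<ge> 0" and c_sum: "(\<Sum>\<alpha>\<in>multi_idx n N. c \<alpha>) > 0"
    and x: "\<forall>i<n. x i > 0"
  shows "hpoly_eval n N c x > 0"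
proof -
  obtain \<beta> where \<beta>: "\<beta> \<in> multi_idx n N" "c \<beta> > 0"
    using c_sum c_nonneg by (metis less_eq_real_def sum_nonpos not_le)
  have monomial_pos: "(\<Prod>i<n. x i ^ \<alpha> i) > 0" for \<alpha> using x by (intro prod_pos) auto
  then have "0 < c \<beta> * (\<Prod>i<n. x i ^ \<beta> i)" using \<beta> by simp
  also have "\<dots> \<le> hpoly_eval n N c x"
    unfolding hpoly_eval_def using \<beta> c_nonneg monomial_pos
    by (intro member_le_sum finite_multi_idx) (auto intro: less_imp_le mult_nonneg_nonneg)
  finally show ?thesis .
qed

lemma weighted_am_gm_hpoly_eval:
  assumes c_nonneg: "\<forall>\<alpha>\<in>multi_idx n N. c \<alpha> \<ge> 0" and c_sum: "(\<Sum>\<alpha>\<in>multi_idx n N. c \<alpha>) = 1"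
    and mean_exponent: "\<forall>j<n. (\<Sum>\<alpha>\<in>multi_idx n N. c \<alpha> * real (\<alpha> j)) = k"
    and x: "\<forall>i<n. x i > 0"
  shows "k * ln (\<Prod>i<n. x i) \<le> ln (hpoly_eval n N c x)"
proof -
  define S where "S = multi_idx n N"
  define y where "y \<alpha> = (\<Prod>i<n. x i ^ \<alpha> i)" for \<alpha> :: "nat \<Rightarrow> nat"
  have ln_y: "ln (y \<alpha>) = (\<Sum>i<n. real (\<alpha> i) * ln (x i))" for \<alpha>
    unfolding y_def using x by (subst ln_prod) (auto simp: ln_realpow)
  have "k * ln (\<Prod>i<n. x i) = (\<Sum>i<n. ln (x i) * (\<Sum>\<alpha>\<in>S. c \<alpha> * real (\<alpha> i)))"
    using x mean_exponent unfolding S_def by (subst ln_prod) (auto simp: sum_distrib_left mult.commute)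
  also have "\<dots> = (\<Sum>\<alpha>\<in>S. \<Sum>i<n. c \<alpha> * (real (\<alpha> i) * ln (x i)))"
    by (subst sum.swap) (simp add: sum_distrib_left mult_ac)
  also have "\<dots> = (\<Sum>\<alpha>\<in>S. c \<alpha> * ln (y \<alpha>))" by (simp add: ln_y sum_distrib_left)
  also have "\<dots> \<le> ln (\<Sum>\<alpha>\<in>S. c \<alpha> *\<^sub>R y \<alpha>)"
    using x c_nonneg c_sum finite_multi_idx unfolding S_def y_def
    by (intro concave_on_sum[OF _ _ ln_concave]) (auto intro: prod_pos simp: sum_nonneg_eq_0_iff)
  also have "\<dots> = ln (hpoly_eval n N c x)" unfolding hpoly_eval_def S_def y_def by simp
  finally show ?thesis .
qed

lemma geometric_mean_le_hpoly_eval_powr: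
  assumes c_nonneg: "\<forall>\<alpha>\<in>multi_idx n N. c \<alpha> \<ge> 0" and c_sum: "(\<Sum>\<alpha>\<in>multi_idx n N. c \<alpha>) = 1"
    and mean_exponent: "\<forall>j<n. (\<Sum>\<alpha>\<in>multi_idx n N. c \<alpha> * real (\<alpha> j)) = k"
    and k_pos: "k > 0" and x: "\<forall>i<n. x i > 0"
  shows "(\<Prod>i<n. x i) powr (1 / real n) \<le> hpoly_eval n N c x powr (1 / real N)"
proof -
  define P where "P = (\<Prod>i<n. x i)"
  define p where "p = hpoly_eval n N c x"
  have P: "P > 0" unfolding P_def using x by (intro prod_pos) auto
  have p: "p > 0" unfolding p_def using c_nonneg c_sum x by (intro hpoly_eval_pos) auto
  have "real N = (\<Sum>j<n. \<Sum>\<alpha>\<in>multi_idx n N. c \<alpha> * real (\<alpha> j))"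
    using euler_identity_hpoly_ones[where c = c and n = n and N = N] c_sum by simp
  also have "\<dots> = real n * k" using mean_exponent by simp
  finally have N_eq: "real N = real n * k" .
  have "(1 / real n) * ln P \<le> (1 / real N) * ln p"
  proof (cases "n = 0")
    case False
    then have "(1 / real n) * ln P = (1 / real N) * (k * ln P)" using N_eq k_pos by simp
    also have "\<dots> \<le> (1 / real N) * ln p"
      using weighted_am_gm_hpoly_eval[OF c_nonneg c_sum mean_exponent x]
      unfolding P_def p_def by (intro mult_left_mono) auto
    finally show ?thesis .
  qed (use N_eq in simp)
  then show ?thesis using P p unfolding P_def[symmetric] p_def[symmetric] powr_def by simp
qed

section \<open>Eigenvalues\<close>

lemma pos_def_sym_eigenvalue_pos:
  assumes A: "pos_def_sym n A" and ev: "eigenvalue A a"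
  shows "a > 0"
proof -
  from ev obtain v where "eigenvector A v a" unfolding eigenvalue_def by blast
  then have v: "v \<in> carrier_vec n" "v \<noteq> 0\<^sub>v n" "A *\<^sub>v v = a \<cdot>\<^sub>v v"
    using A unfolding eigenvector_def pos_def_sym_def by auto
  have "v \<bullet> (A *\<^sub>v v) > 0" using A v(1,2) unfolding pos_def_sym_def by blast
  then have "a * (v \<bullet> v) > 0" using v(1,3) by simp
  moreover have "v \<bullet> v \<ge> 0" unfolding scalar_prod_def by (intro sum_nonneg) simp
  ultimately show "a > 0" by (simp add: zero_less_mult_iff)
qed

lemma det_eq_prod_list_roots_char_poly:
  fixes A :: "'a :: field mat"
  assumes A: "A \<in> carrier_mat n n" and char_poly: "char_poly A = (\<Prod>a\<leftarrow>ls. [:- a, 1:])"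
    and len: "length ls = n"
  shows "det A = prod_list ls"
proof -
  have "char_matrix A 0 = A" using A by (intro eq_matI) (auto simp: char_matrix_def)
  moreover have "- A = (-1) \<cdot>\<^sub>m A" using A by (intro eq_matI) auto
  ultimately have "(-1) ^ n * det A = poly (char_poly A) 0"
    unfolding char_poly_matrix[OF A] det_smult using A by simp
  also have "\<dots> = (-1) ^ n * prod_list ls"
    unfolding char_poly poly_prod_list len[symmetric] by (induct ls) auto
  finally show ?thesis by simp
qed

lemma sorted_eigenvalues_pos:
  assumes A: "pos_def_sym n A" and ev: "sorted_eigenvalues n A ls" and i: "i < n"
  shows "ls ! i > 0"
proof (rule pos_def_sym_eigenvalue_pos[OF A])
  have root: "poly (\<Prod>b\<leftarrow>xs. [:- b, 1:]) a = 0" if "a \<in> set xs" for a :: real and xs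
    using that by (induct xs) auto
  have "poly (char_poly A) (ls ! i) = 0"
    using ev i unfolding sorted_eigenvalues_def by (auto intro: root)
  then show "eigenvalue A (ls ! i)"
    using A eigenvalue_root_char_poly unfolding pos_def_sym_def by blast
qed

lemma det_eq_prod_sorted_eigenvalues:
  assumes A: "pos_def_sym n A" and ev: "sorted_eigenvalues n A ls"
  shows "det A = (\<Prod>i<n. ls ! i)"
proof -
  have "det A = prod_list ls"
    using A ev unfolding pos_def_sym_def sorted_eigenvalues_def
    by (intro det_eq_prod_list_roots_char_poly) auto
  then show ?thesis using ev unfolding sorted_eigenvalues_def
    by (simp add: prod.list_conv_set_nth atLeast0LessThan)
qed

theorem mainTheorem13:
  fixes n N :: nat and c :: "(nat \<Rightarrow> nat) \<Rightarrow> real" and k :: real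
  assumes coeff_nonneg: "\<forall>\<alpha>\<in>multi_idx n N. c \<alpha> \<ge> 0"
    and p_e: "hpoly_eval n N c (\<lambda>i. 1) = 1"
    and k_pos: "k > 0"
    and partials: "\<forall>j<n. ((\<lambda>t. hpoly_eval n N c (\<lambda>i. 1 + (if i = j then t else 0)))
                          has_real_derivative k) (at 0)"
  shows "\<forall>A. pos_def_sym n A \<longrightarrow>
           hpoly_eval n N c (\<lambda>i. A $$ (i, i)) powr (1 / real N) \<ge> det A powr (1 / real n)
         \<and> (\<forall>ls. sorted_eigenvalues n A ls \<longrightarrow>
              hpoly_eval n N c (\<lambda>i. ls ! i) powr (1 / real N) \<ge> det A powr (1 / real n))"
proof (intro allI impI conjI)
  have c_sum: "(\<Sum>\<alpha>\<in>multi_idx n N. c \<alpha>) = 1" using p_e by (simp add: hpoly_eval_ones)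
  have "\<forall>j<n. (\<Sum>\<alpha>\<in>multi_idx n N. c \<alpha> * real (\<alpha> j)) = k"
    using DERIV_unique[OF has_real_derivative_hpoly_eval_ones partials[rule_format]] by blast
  note am_gm = geometric_mean_le_hpoly_eval_powr[OF coeff_nonneg c_sum this k_pos]
  fix A assume A: "pos_def_sym n A"
  have "det A powr (1 / real n) \<le> (\<Prod>i<n. A $$ (i, i)) powr (1 / real n)"
    using hadamard_pos_def_sym[OF A] by (intro powr_mono2) auto
  also have "\<dots> \<le> hpoly_eval n N c (\<lambda>i. A $$ (i, i)) powr (1 / real N)"
    using am_gm[of "\<lambda>i. A $$ (i, i)"] pos_def_sym_diag_pos[OF A] by simp
  finally show "hpoly_eval n N c (\<lambda>i. A $$ (i, i)) powr (1 / real N) \<ge> det A powr (1 / real n)" .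
  fix ls assume ev: "sorted_eigenvalues n A ls"
  show "hpoly_eval n N c (\<lambda>i. ls ! i) powr (1 / real N) \<ge> det A powr (1 / real n)"
    unfolding det_eq_prod_sorted_eigenvalues[OF A ev]
    using am_gm[of "\<lambda>i. ls ! i"] sorted_eigenvalues_pos[OF A ev] by simp
qed

end
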